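(* Let $\Gamma$ be a totally ordered additive abelian group, $E$ a finite set, $r\ge0$, and $\nu\colon\Delta_E^r\to\overline{\Gamma}$ a function with cage $\mathbf{a}=(a_s)_{s\in E}$. Let $\pi\colon E'\to E$ be a map of finite sets with $|\pi^{-1}(s)|=a_s$ for all $s\in E$, and let the multisymmetric lift $M_\pi(\nu)\colon\binom{E'}{r}\to\overline{\Gamma}$ be $M_\pi(\nu)(S')=\nu\big(\sum_{s'\in S'}e_{\pi(s')}\big)$. Then $\nu$ is $M$-convex if and only if $M_\pi(\nu)$ is a valuated matroid of rank $r$ on $E'$.
   Context: $\overline{\Gamma}=\Gamma\sqcup\{\infty\}$ with $\infty$ larger than every element of $\Gamma$. $e_s$ is the standard basis vector of $\mathbb{Z}^E$; $\Delta_E^r=\{\alpha\in\mathbb{Z}^E_{\ge0}\mid\sum_e\alpha_e=r\}$; $\binom{E'}{r}$ is the set of $r$-element subsets of $E'$. The cage of $\nu$ is the tuple $(a_s)_{s\in E}$ where $a_s$ is the smallest non-negative integer with $a_s\geq\alpha_s$ for all $\alpha\in\Delta_E^r$ with $\nu(\alpha)\neq\infty$. An $M$-convex function of rank $r$ is a map $\nu\colon\Delta_E^r\to\overline{\Gamma}$, not identically $\infty$, such that for all $\alpha,\beta\in\Delta_E^r$ and $s\in E$ with $\alpha_s>\beta_s$ there is $t\in E$ with $\beta_t>\alpha_t$ and $\nu(\alpha)+\nu(\beta)\geq\nu(\alpha-e_s+e_t)+\nu(\beta-e_t+e_s)$. A valuated matroid of rank $r$ on a finite set $X$ is a map $\mu\colon\binom{X}{r}\to\overline{\Gamma}$,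 not identically $\infty$, such that for all $S,T\in\binom{X}{r}$ and $s\in S- T$ there is $t\in T- S$ with $\mu(S)+\mu(T)\geq\mu(S-\{s\}\cup\{t\})+\mu(T-\{t\}\cup\{s\})$. *)

theory Defs
  imports Main
begin

datatype 'g ext = Fin 'g | Inf

fun ext_plus :: "'g::linordered_ab_group_add ext \<Rightarrow> 'g ext \<Rightarrow> 'g ext" where
  "ext_plus (Fin a) (Fin b) = Fin (a + b)"
| "ext_plus _ _ = Inf"

fun ext_le :: "'g::linordered_ab_group_add ext \<Rightarrow> 'g ext \<Rightarrow> bool" where
  "ext_le (Fin a) (Fin b) = (a \<le> b)"
| "ext_le _ Inf = True"
| "ext_le Inf (Fin _) = False"

definition ebas :: "'s \<Rightarrow> 's \<Rightarrow> nat" where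
  "ebas s = (\<lambda>t. if t = s then 1 else 0)"

definition Delta :: "'s set \<Rightarrow> nat \<Rightarrow> ('s \<Rightarrow> nat) set" where
  "Delta E r = {\<alpha>. (\<forall>s. s \<notin> E \<longrightarrow> \<alpha> s = 0) \<and> (\<Sum>s\<in>E. \<alpha> s) = r}"

definition cage :: "'s set \<Rightarrow> nat \<Rightarrow> (('s \<Rightarrow> nat) \<Rightarrow> 'g ext) \<Rightarrow> 's \<Rightarrow> nat" where
  "cage E r \<nu> s = (LEAST n. \<forall>\<alpha>\<in>Delta E r. \<nu> \<alpha> \<noteq> Inf \<longrightarrow> \<alpha> s \<le> n)"

definition M_convex :: "'s set \<Rightarrow> nat \<Rightarrow> (('s \<Rightarrow> nat) \<Rightarrow> 'g::linordered_ab_group_add ext) \<Rightarrow> bool" where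
  "M_convex E r \<nu> \<longleftrightarrow>
     (\<exists>\<alpha>\<in>Delta E r. \<nu> \<alpha> \<noteq> Inf) \<and>
     (\<forall>\<alpha>\<in>Delta E r. \<forall>\<beta>\<in>Delta E r. \<forall>s\<in>E. \<alpha> s > \<beta> s \<longrightarrow>
        (\<exists>t\<in>E. \<beta> t > \<alpha> t \<and>
           ext_le (ext_plus (\<nu> (\<lambda>u. \<alpha> u - ebas s u + ebas t u)) (\<nu> (\<lambda>u. \<beta> u - ebas t u + ebas s u)))
                  (ext_plus (\<nu> \<alpha>) (\<nu> \<beta>))))"

definition valuated_matroid :: "'x set \<Rightarrow> nat \<Rightarrow> ('x set \<Rightarrow> 'g::linordered_ab_group_add ext) \<Rightarrow> bool" where
  "valuated_matroid X r \<mu> \<longleftrightarrow>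
     (\<exists>S. S \<subseteq> X \<and> card S = r \<and> \<mu> S \<noteq> Inf) \<and>
     (\<forall>S T. S \<subseteq> X \<and> card S = r \<and> T \<subseteq> X \<and> card T = r \<longrightarrow>
        (\<forall>s\<in>S - T. \<exists>t\<in>T - S.
           ext_le (ext_plus (\<mu> (S - {s} \<union> {t})) (\<mu> (T - {t} \<union> {s}))) (ext_plus (\<mu> S) (\<mu> T))))"

definition msym_lift :: "('t \<Rightarrow> 's) \<Rightarrow> (('s \<Rightarrow> nat) \<Rightarrow> 'g ext) \<Rightarrow> 't set \<Rightarrow> 'g ext" where
  "msym_lift \<pi> \<nu> S' = \<nu> (\<lambda>u. \<Sum>s'\<in>S'. ebas (\<pi> s') u)"

end

theory Submission
  imports Defs
begin

text \<open>For \<open>S \<subseteq> E'\<close> let \<open>\<alpha>\<^sub>S = \<Sum>x\<in>S. e\<^bsub>\<pi> x\<^esub>\<close> count the elements of \<open>S\<close> over each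
  \<open>u \<in> E\<close>. Since \<open>\<alpha>\<^bsub>S - {s} \<union> {t}\<^esub> = \<alpha>\<^sub>S - e\<^bsub>\<pi> s\<^esub> + e\<^bsub>\<pi> t\<^esub>\<close>, the matroid exchange
  for \<open>S, T\<close> is the M-convex exchange for \<open>\<alpha>\<^sub>S, \<alpha>\<^sub>T\<close>. Given \<open>s \<in> S - T\<close>: if
  \<open>\<alpha>\<^sub>S (\<pi> s) > \<alpha>\<^sub>T (\<pi> s)\<close>, M-convexity yields \<open>t\<^sub>0\<close> with \<open>\<alpha>\<^sub>T t\<^sub>0 > \<alpha>\<^sub>S t\<^sub>0\<close>, and \<open>T - S\<close>
  has an element over \<open>t\<^sub>0\<close>; otherwise \<open>T - S\<close> has an element over \<open>\<pi> s\<close> itself, and the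
  exchange leaves both vectors unchanged. Conversely, the cage condition makes every \<open>\<alpha>\<close>
  with finite value equal to \<open>\<alpha>\<^sub>S\<close> for an \<open>r\<close>-subset \<open>S\<close> of \<open>E'\<close>. Realising all vectors
  by prefixes of one fixed enumeration of each fibre makes the realisations of \<open>\<alpha>\<close> and \<open>\<beta>\<close>
  nested fibrewise, so every \<open>t \<in> T - S\<close> supplied by the matroid exchange lies over a
  coordinate where \<open>\<beta>\<close> exceeds \<open>\<alpha>\<close>.\<close>

lemma ext_le_refl: "ext_le x x"
  by (cases x) auto

lemma minus_ebas_plus_ebas_same:
  assumes "1 \<le> \<alpha> s"
  shows "(\<lambda>u. \<alpha> u - ebas s u + ebas s u) = \<alpha>"
  using assms by (auto simp: ebas_def)

lemma Delta_coordinate_le: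
  assumes "finite E" "\<alpha> \<in> Delta E r"
  shows "\<alpha> u \<le> r"
proof (cases "u \<in> E")
  case True
  then have "\<alpha> u \<le> (\<Sum>s\<in>E. \<alpha> s)" using assms(1) by (simp add: member_le_sum)
  then show ?thesis using assms(2) by (simp add: Delta_def)
qed (use assms(2) in \<open>simp add: Delta_def\<close>)

lemma Delta_ex_coordinate_greater:
  assumes "finite E" "\<alpha> \<in> Delta E r" "\<beta> \<in> Delta E r" "s \<in> E" "\<beta> s < \<alpha> s"
  shows "\<exists>t\<in>E. \<alpha> t < \<beta> t"
proof (rule ccontr)
  assume "\<not> ?thesis"
  then have "(\<Sum>t\<in>E. \<beta> t) < (\<Sum>t\<in>E. \<alpha> t)"
    using sum_strict_mono_ex1[OF assms(1)] assms(4,5) by (metis not_less)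
  then show False using assms(2,3) by (simp add: Delta_def)
qed

lemma cage_upper_bound:
  assumes "finite E" "\<alpha> \<in> Delta E r" "\<nu> \<alpha> \<noteq> Inf"
  shows "\<alpha> u \<le> cage E r \<nu> u"
proof -
  have "\<forall>\<alpha>\<in>Delta E r. \<nu> \<alpha> \<noteq> Inf \<longrightarrow> \<alpha> u \<le> r"
    using Delta_coordinate_le[OF assms(1)] by blast
  then have "\<forall>\<alpha>\<in>Delta E r. \<nu> \<alpha> \<noteq> Inf \<longrightarrow> \<alpha> u \<le> cage E r \<nu> u"
    unfolding cage_def by (rule LeastI)
  then show ?thesis using assms(2,3) by blast
qed

lemma M_convexD:
  assumes "M_convex E r \<nu>" "\<alpha> \<in> Delta E r" "\<beta> \<in> Delta E r" "s \<in> E" "\<beta> s < \<alpha> s"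
  obtains t where "t \<in> E" "\<alpha> t < \<beta> t"
    "ext_le (ext_plus (\<nu> (\<lambda>u. \<alpha> u - ebas s u + ebas t u)) (\<nu> (\<lambda>u. \<beta> u - ebas t u + ebas s u)))
            (ext_plus (\<nu> \<alpha>) (\<nu> \<beta>))"
  using assms unfolding M_convex_def by blast

lemma valuated_matroidD:
  assumes "valuated_matroid X r \<mu>" "S \<subseteq> X" "card S = r" "T \<subseteq> X" "card T = r" "s \<in> S - T"
  obtains t where "t \<in> T - S"
    "ext_le (ext_plus (\<mu> (S - {s} \<union> {t})) (\<mu> (T - {t} \<union> {s}))) (ext_plus (\<mu> S) (\<mu> T))"
  using assms unfolding valuated_matroid_def by blast

definition fibre_count :: "('t \<Rightarrow> 's) \<Rightarrow> 't set \<Rightarrow> 's \<Rightarrow> nat" where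
  "fibre_count \<pi> S u = card {x\<in>S. \<pi> x = u}"

lemma sum_ebas_eq_fibre_count:
  assumes "finite S"
  shows "(\<lambda>u. \<Sum>s'\<in>S. ebas (\<pi> s') u) = fibre_count \<pi> S"
proof
  fix u
  have "(\<Sum>s'\<in>S. ebas (\<pi> s') u) = (\<Sum>s'\<in>S. if \<pi> s' = u then 1 else 0)"
    by (simp add: ebas_def eq_commute)
  also have "\<dots> = card {x\<in>S. \<pi> x = u}"
    using assms by (simp add: sum.inter_filter[symmetric])
  finally show "(\<Sum>s'\<in>S. ebas (\<pi> s') u) = fibre_count \<pi> S u"
    by (simp add: fibre_count_def)
qed

lemma msym_lift_eq_fibre_count:
  "finite S \<Longrightarrow> msym_lift \<pi> \<nu> S = \<nu> (fibre_count \<pi> S)"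
  by (simp add: msym_lift_def sum_ebas_eq_fibre_count)

lemma fibre_count_exchange:
  assumes "finite S" "s \<in> S" "t \<notin> S"
  shows "fibre_count \<pi> (S - {s} \<union> {t})
           = (\<lambda>u. fibre_count \<pi> S u - ebas (\<pi> s) u + ebas (\<pi> t) u)"
proof
  fix u
  have fin: "finite {x\<in>S. \<pi> x = u}" using assms(1) by auto
  have "{x\<in>S - {s} \<union> {t}. \<pi> x = u} =
     (if \<pi> t = u then insert t ({x\<in>S. \<pi> x = u} - {s}) else {x\<in>S. \<pi> x = u} - {s})"
    using assms by auto
  moreover have "\<pi> s = u \<Longrightarrow> 1 \<le> card {x\<in>S. \<pi> x = u}"
    using fin assms(2) by (metis (mono_tags) One_nat_def Suc_leI card_gt_0_iff empty_iff mem_Collect_eq)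
  ultimately show "fibre_count \<pi> (S - {s} \<union> {t}) u
                     = fibre_count \<pi> S u - ebas (\<pi> s) u + ebas (\<pi> t) u"
    unfolding fibre_count_def using fin assms by (auto simp: ebas_def card_Diff_singleton_if)
qed

lemma msym_lift_exchange:
  assumes "finite S" "s \<in> S" "t \<notin> S"
  shows "msym_lift \<pi> \<nu> (S - {s} \<union> {t})
           = \<nu> (\<lambda>u. fibre_count \<pi> S u - ebas (\<pi> s) u + ebas (\<pi> t) u)"
proof -
  have "finite (S - {s} \<union> {t})" using assms(1) by simp
  then show ?thesis by (simp only: msym_lift_eq_fibre_count fibre_count_exchange[OF assms])
qed

lemma msym_lift_exchange_inequality_iff:
  assumes "finite S" "finite T" "s \<in> S - T" "t \<in> T - S"
  shows "ext_le (ext_plus (msym_lift \<pi> \<nu> (S - {s} \<union> {t})) (msym_lift \<pi> \<nu> (T - {t} \<union> {s})))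
                (ext_plus (msym_lift \<pi> \<nu> S) (msym_lift \<pi> \<nu> T))
     \<longleftrightarrow> ext_le (ext_plus (\<nu> (\<lambda>u. fibre_count \<pi> S u - ebas (\<pi> s) u + ebas (\<pi> t) u))
                             (\<nu> (\<lambda>u. fibre_count \<pi> T u - ebas (\<pi> t) u + ebas (\<pi> s) u)))
                (ext_plus (\<nu> (fibre_count \<pi> S)) (\<nu> (fibre_count \<pi> T)))"
proof -
  have "s \<in> S" "t \<notin> S" "t \<in> T" "s \<notin> T" using assms(3,4) by auto
  then show ?thesis
    by (simp only: msym_lift_exchange[OF assms(1) \<open>s \<in> S\<close> \<open>t \<notin> S\<close>]
        msym_lift_exchange[OF assms(2) \<open>t \<in> T\<close> \<open>s \<notin> T\<close>]
        msym_lift_eq_fibre_count[OF assms(1)] msym_lift_eq_fibre_count[OF assms(2)])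
qed

lemma ex_fibre_element_if_fibre_count_less:
  assumes "finite S" "fibre_count \<pi> S u < fibre_count \<pi> T u"
  shows "\<exists>t\<in>T - S. \<pi> t = u"
proof (rule ccontr)
  assume "\<not> ?thesis"
  then have "{x\<in>T. \<pi> x = u} \<subseteq> {x\<in>S. \<pi> x = u}" by blast
  then have "card {x\<in>T. \<pi> x = u} \<le> card {x\<in>S. \<pi> x = u}"
    using assms(1) by (simp add: card_mono)
  then show False using assms(2) by (simp add: fibre_count_def)
qed

lemma M_convex_exchange_over_fibres:
  assumes convex: "M_convex E r \<nu>" and fin: "finite S"
    and Delta: "fibre_count \<pi> S \<in> Delta E r" "fibre_count \<pi> T \<in> Delta E r"
    and s: "s \<in> S - T" "\<pi> s \<in> E"
  obtains t where "t \<in> T - S"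
    "ext_le (ext_plus (\<nu> (\<lambda>u. fibre_count \<pi> S u - ebas (\<pi> s) u + ebas (\<pi> t) u))
                      (\<nu> (\<lambda>u. fibre_count \<pi> T u - ebas (\<pi> t) u + ebas (\<pi> s) u)))
            (ext_plus (\<nu> (fibre_count \<pi> S)) (\<nu> (fibre_count \<pi> T)))"
proof -
  define \<alpha> \<beta> where "\<alpha> = fibre_count \<pi> S" and "\<beta> = fibre_count \<pi> T"
  note that = that[folded \<alpha>_def \<beta>_def]
  show thesis
  proof (cases "\<beta> (\<pi> s) < \<alpha> (\<pi> s)")
    case True
    obtain t0 where "\<alpha> t0 < \<beta> t0" and ineq:
      "ext_le (ext_plus (\<nu> (\<lambda>u. \<alpha> u - ebas (\<pi> s) u + ebas t0 u))
                        (\<nu> (\<lambda>u. \<beta> u - ebas t0 u + ebas (\<pi> s) u)))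
              (ext_plus (\<nu> \<alpha>) (\<nu> \<beta>))"
      by (rule M_convexD[OF convex Delta[folded \<alpha>_def \<beta>_def] s(2) True])
    obtain t where "t \<in> T - S" "\<pi> t = t0"
      using ex_fibre_element_if_fibre_count_less[OF fin \<open>\<alpha> t0 < \<beta> t0\<close>[unfolded \<alpha>_def \<beta>_def]]
      by blast
    show thesis using ineq by (rule that[OF \<open>t \<in> T - S\<close>, unfolded \<open>\<pi> t = t0\<close>])
  next
    case False
    have fibre_S: "{x\<in>S - {s}. \<pi> x = \<pi> s} = {x\<in>S. \<pi> x = \<pi> s} - {s}" by blast
    have "s \<in> {x\<in>S. \<pi> x = \<pi> s}" "finite {x\<in>S. \<pi> x = \<pi> s}" using s fin by auto
    then have \<alpha>_pos: "1 \<le> \<alpha> (\<pi> s)" and "fibre_count \<pi> (S - {s}) (\<pi> s) = \<alpha> (\<pi> s) - 1"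
      unfolding \<alpha>_def fibre_count_def fibre_S by (auto simp: Suc_le_eq card_gt_0_iff)
    with False have "fibre_count \<pi> (S - {s}) (\<pi> s) < fibre_count \<pi> T (\<pi> s)"
      unfolding \<beta>_def by linarith
    moreover have "finite (S - {s})" using fin by simp
    ultimately obtain t where "t \<in> T - (S - {s})" "\<pi> t = \<pi> s"
      using ex_fibre_element_if_fibre_count_less by (metis (no_types))
    with s have "t \<in> T - S" by blast
    have "1 \<le> \<beta> (\<pi> s)" using False \<alpha>_pos by linarith
    \<comment> \<open>\<open>t\<close> lies over the same coordinate as \<open>s\<close>, so both exchanged vectors are unchanged.\<close>
    show thesis
      by (rule that[OF \<open>t \<in> T - S\<close>]) (simp only: \<open>\<pi> t = \<pi> s\<close> ext_le_refl
        minus_ebas_plus_ebas_same[of \<alpha>, OF \<alpha>_pos] minus_ebas_plus_ebas_same[of \<beta>, OF \<open>1 \<le> \<beta> (\<pi> s)\<close>])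
  qed
qed

locale fibration =
  fixes E :: "'s set" and E' :: "'t set" and \<pi> :: "'t \<Rightarrow> 's"
  assumes finite_E: "finite E" and finite_E': "finite E'"
    and maps_into: "\<forall>s'\<in>E'. \<pi> s' \<in> E"
begin

abbreviation fibre :: "'s \<Rightarrow> 't set" where
  "fibre u \<equiv> {s'\<in>E'. \<pi> s' = u}"

lemma fibre_count_in_Delta:
  assumes "S \<subseteq> E'"
  shows "fibre_count \<pi> S \<in> Delta E (card S)"
proof -
  have "finite S" using assms finite_E' finite_subset by blast
  have "S = (\<Union>u\<in>E. {x\<in>S. \<pi> x = u})" using assms maps_into by auto
  then have "card S = (\<Sum>u\<in>E. card {x\<in>S. \<pi> x = u})"
    using card_UN_disjoint[of E "\<lambda>u. {x\<in>S. \<pi> x = u}"] finite_E \<open>finite S\<close> by auto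
  moreover have "fibre_count \<pi> S u = 0" if "u \<notin> E" for u
  proof -
    have "{x\<in>S. \<pi> x = u} = {}" using that assms maps_into by blast
    then show ?thesis unfolding fibre_count_def by (simp only: card.empty)
  qed
  ultimately show ?thesis by (simp add: Delta_def fibre_count_def)
qed

definition fibre_list :: "'s \<Rightarrow> 't list" where
  "fibre_list u = (SOME xs. distinct xs \<and> set xs = fibre u)"

definition realise :: "('s \<Rightarrow> nat) \<Rightarrow> 't set" where
  "realise \<gamma> = (\<Union>u\<in>E. set (take (\<gamma> u) (fibre_list u)))"

lemma fibre_list: "distinct (fibre_list u)" "set (fibre_list u) = fibre u"
proof -
  have "\<exists>xs. distinct xs \<and> set xs = fibre u"
    using finite_E' finite_distinct_list[of "fibre u"] by auto
  then show "distinct (fibre_list u)" "set (fibre_list u) = fibre u"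
    unfolding fibre_list_def by (metis (mono_tags, lifting) someI_ex)+
qed

lemma realise_subset: "realise \<gamma> \<subseteq> E'"
  unfolding realise_def using fibre_list(2) by (auto dest: in_set_takeD)

lemma fibre_of_realise:
  assumes "u \<in> E"
  shows "{x\<in>realise \<gamma>. \<pi> x = u} = set (take (\<gamma> u) (fibre_list u))"
proof
  show "{x\<in>realise \<gamma>. \<pi> x = u} \<subseteq> set (take (\<gamma> u) (fibre_list u))"
  proof
    fix x assume "x \<in> {x\<in>realise \<gamma>. \<pi> x = u}"
    then obtain v where "x \<in> set (take (\<gamma> v) (fibre_list v))" "\<pi> x = u"
      by (auto simp: realise_def)
    moreover from this have "\<pi> x = v" using fibre_list(2)[of v] by (auto dest: in_set_takeD)
    ultimately show "x \<in> set (take (\<gamma> u) (fibre_list u))" by simp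
  qed
  show "set (take (\<gamma> u) (fibre_list u)) \<subseteq> {x\<in>realise \<gamma>. \<pi> x = u}"
    using assms fibre_list(2) by (auto simp: realise_def dest: in_set_takeD)
qed

lemma fibre_count_realise:
  assumes "\<forall>u\<in>E. \<gamma> u \<le> card (fibre u)" "\<forall>u. u \<notin> E \<longrightarrow> \<gamma> u = 0"
  shows "fibre_count \<pi> (realise \<gamma>) = \<gamma>"
proof
  fix u
  show "fibre_count \<pi> (realise \<gamma>) u = \<gamma> u"
  proof (cases "u \<in> E")
    case True
    have "length (fibre_list u) = card (fibre u)"
      using fibre_list distinct_card by metis
    then show ?thesis
      using True assms(1) fibre_list(1)
      by (simp add: fibre_count_def fibre_of_realise distinct_card)
  next
    case False
    then have empty: "{x\<in>realise \<gamma>. \<pi> x = u} = {}" using realise_subset maps_into by blast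
    show ?thesis using assms(2) False unfolding fibre_count_def empty by simp
  qed
qed

lemma realise_Delta:
  assumes "\<alpha> \<in> Delta E r" "\<forall>u\<in>E. \<alpha> u \<le> card (fibre u)"
  shows "realise \<alpha> \<subseteq> E'" "finite (realise \<alpha>)"
    "fibre_count \<pi> (realise \<alpha>) = \<alpha>" "card (realise \<alpha>) = r"
proof -
  show sub: "realise \<alpha> \<subseteq> E'" by (rule realise_subset)
  then show "finite (realise \<alpha>)" using finite_E' finite_subset by blast
  show cnt: "fibre_count \<pi> (realise \<alpha>) = \<alpha>"
    using assms by (intro fibre_count_realise) (auto simp: Delta_def)
  show "card (realise \<alpha>) = r"
    using fibre_count_in_Delta[OF sub] assms(1) by (simp add: cnt Delta_def)
qed

lemma realise_diff_less:
  assumes "x \<in> realise \<alpha>" "x \<notin> realise \<beta>"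
  shows "\<beta> (\<pi> x) < \<alpha> (\<pi> x)"
proof (rule ccontr)
  have "\<pi> x \<in> E" using assms(1) realise_subset maps_into by blast
  assume "\<not> ?thesis"
  then have "set (take (\<alpha> (\<pi> x)) (fibre_list (\<pi> x))) \<subseteq> set (take (\<beta> (\<pi> x)) (fibre_list (\<pi> x)))"
    by (simp add: set_take_subset_set_take)
  then show False using assms fibre_of_realise[OF \<open>\<pi> x \<in> E\<close>] by blast
qed

lemma M_convex_imp_valuated_matroid_lift:
  assumes cage_le: "\<forall>u\<in>E. cage E r \<nu> u \<le> card (fibre u)"
    and convex: "M_convex E r \<nu>"
  shows "valuated_matroid E' r (msym_lift \<pi> \<nu>)"
  unfolding valuated_matroid_def
proof (intro conjI allI impI ballI)
  obtain \<alpha> where \<alpha>: "\<alpha> \<in> Delta E r" "\<nu> \<alpha> \<noteq> Inf"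
    using conjunct1[OF convex[unfolded M_convex_def]] by blast
  then have "\<forall>u\<in>E. \<alpha> u \<le> card (fibre u)"
    using cage_upper_bound[OF finite_E] cage_le le_trans by blast
  note R = realise_Delta[OF \<alpha>(1) this]
  show "\<exists>S\<subseteq>E'. card S = r \<and> msym_lift \<pi> \<nu> S \<noteq> Inf"
    by (intro exI[of _ "realise \<alpha>"]) (simp add: R msym_lift_eq_fibre_count[OF R(2)] \<alpha>(2))
next
  fix S T s
  assume ST: "S \<subseteq> E' \<and> card S = r \<and> T \<subseteq> E' \<and> card T = r" and s: "s \<in> S - T"
  have fin: "finite S" "finite T" using ST finite_E' finite_subset by blast+
  have Delta: "fibre_count \<pi> S \<in> Delta E r" "fibre_count \<pi> T \<in> Delta E r"
    using fibre_count_in_Delta[of S] fibre_count_in_Delta[of T] ST by simp_all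
  have "\<pi> s \<in> E" using s ST maps_into by blast
  obtain t where t: "t \<in> T - S" and exchange:
    "ext_le (ext_plus (\<nu> (\<lambda>u. fibre_count \<pi> S u - ebas (\<pi> s) u + ebas (\<pi> t) u))
                      (\<nu> (\<lambda>u. fibre_count \<pi> T u - ebas (\<pi> t) u + ebas (\<pi> s) u)))
            (ext_plus (\<nu> (fibre_count \<pi> S)) (\<nu> (fibre_count \<pi> T)))"
    by (rule M_convex_exchange_over_fibres[OF convex fin(1) Delta s \<open>\<pi> s \<in> E\<close>])
  have "ext_le (ext_plus (msym_lift \<pi> \<nu> (S - {s} \<union> {t})) (msym_lift \<pi> \<nu> (T - {t} \<union> {s})))
               (ext_plus (msym_lift \<pi> \<nu> S) (msym_lift \<pi> \<nu> T))"
    using exchange unfolding msym_lift_exchange_inequality_iff[OF fin s t] .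
  with t show "\<exists>t\<in>T - S. ext_le (ext_plus (msym_lift \<pi> \<nu> (S - {s} \<union> {t}))
                                             (msym_lift \<pi> \<nu> (T - {t} \<union> {s})))
                                   (ext_plus (msym_lift \<pi> \<nu> S) (msym_lift \<pi> \<nu> T))"
    by blast
qed

lemma valuated_matroid_lift_imp_M_convex:
  assumes cage_le: "\<forall>u\<in>E. cage E r \<nu> u \<le> card (fibre u)"
    and matroid: "valuated_matroid E' r (msym_lift \<pi> \<nu>)"
  shows "M_convex E r \<nu>"
  unfolding M_convex_def
proof (intro conjI ballI impI)
  obtain S where S: "S \<subseteq> E'" "card S = r" "msym_lift \<pi> \<nu> S \<noteq> Inf"
    using matroid unfolding valuated_matroid_def by blast
  moreover have "finite S" using S(1) finite_E' finite_subset by blast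
  ultimately show "\<exists>\<alpha>\<in>Delta E r. \<nu> \<alpha> \<noteq> Inf"
    using fibre_count_in_Delta[OF S(1)] by (auto simp: msym_lift_eq_fibre_count)
next
  fix \<alpha> \<beta> s0
  assume \<alpha>\<beta>: "\<alpha> \<in> Delta E r" "\<beta> \<in> Delta E r" and "s0 \<in> E" and less: "\<beta> s0 < \<alpha> s0"
  show "\<exists>t\<in>E. \<alpha> t < \<beta> t \<and>
           ext_le (ext_plus (\<nu> (\<lambda>u. \<alpha> u - ebas s0 u + ebas t u)) (\<nu> (\<lambda>u. \<beta> u - ebas t u + ebas s0 u)))
                  (ext_plus (\<nu> \<alpha>) (\<nu> \<beta>))"
  proof (cases "\<nu> \<alpha> = Inf \<or> \<nu> \<beta> = Inf")
    case True
    then show ?thesis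
      using Delta_ex_coordinate_greater[OF finite_E \<alpha>\<beta> \<open>s0 \<in> E\<close> less] by auto
  next
    case False
    have "\<forall>u\<in>E. \<alpha> u \<le> card (fibre u)" "\<forall>u\<in>E. \<beta> u \<le> card (fibre u)"
      using False cage_upper_bound[OF finite_E] \<alpha>\<beta> cage_le le_trans by blast+
    note S = realise_Delta[OF \<alpha>\<beta>(1) this(1)] and T = realise_Delta[OF \<alpha>\<beta>(2) this(2)]
    obtain s where s: "s \<in> realise \<alpha> - realise \<beta>" "\<pi> s = s0"
      using ex_fibre_element_if_fibre_count_less[OF T(2), of \<pi> s0 "realise \<alpha>"] less
      by (auto simp: S(3) T(3))
    obtain t where t: "t \<in> realise \<beta> - realise \<alpha>" and lifted_exchange:
      "ext_le (ext_plus (msym_lift \<pi> \<nu> (realise \<alpha> - {s} \<union> {t}))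
                        (msym_lift \<pi> \<nu> (realise \<beta> - {t} \<union> {s})))
              (ext_plus (msym_lift \<pi> \<nu> (realise \<alpha>)) (msym_lift \<pi> \<nu> (realise \<beta>)))"
      by (rule valuated_matroidD[OF matroid S(1,4) T(1,4) s(1)])
    have "ext_le (ext_plus (\<nu> (\<lambda>u. \<alpha> u - ebas s0 u + ebas (\<pi> t) u))
                               (\<nu> (\<lambda>u. \<beta> u - ebas (\<pi> t) u + ebas s0 u)))
                     (ext_plus (\<nu> \<alpha>) (\<nu> \<beta>))"
      using lifted_exchange
      unfolding msym_lift_exchange_inequality_iff[OF S(2) T(2) s(1) t] S(3) T(3) s(2) .
    moreover have "\<pi> t \<in> E" using t realise_subset maps_into by blast
    moreover have "\<alpha> (\<pi> t) < \<beta> (\<pi> t)" using t realise_diff_less by blast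
    ultimately show ?thesis by blast
  qed
qed

end

theorem proposition1p4:
  fixes E :: "'s set" and E' :: "'t set" and r :: nat
    and \<nu> :: "('s \<Rightarrow> nat) \<Rightarrow> 'g::linordered_ab_group_add ext"
    and \<pi> :: "'t \<Rightarrow> 's"
  assumes "finite E" and "finite E'"
    and "\<forall>s'\<in>E'. \<pi> s' \<in> E"
    and "\<forall>s\<in>E. card {s'\<in>E'. \<pi> s' = s} = cage E r \<nu> s"
  shows "M_convex E r \<nu> \<longleftrightarrow> valuated_matroid E' r (msym_lift \<pi> \<nu>)"
proof -
  interpret fibration E E' \<pi> using assms(1-3) by unfold_locales
  have "\<forall>u\<in>E. cage E r \<nu> u \<le> card (fibre u)" using assms(4) by simp
  then show ?thesis
    using M_convex_imp_valuated_matroid_lift valuated_matroid_lift_imp_M_convex by blast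
qed

end
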